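(* Let $(w_1,w_2,w_3)\in(0,\infty)^3$ with $w_1+w_2+w_3\ge2\max\{w_1,w_2,w_3\}$, and put $z_1=\frac{w_2+w_3-w_1}{2w_2}$, $z_2=\frac{w_3+w_1-w_2}{2w_3}$, $z_3=\frac{w_1+w_2-w_3}{2w_1}$, so $z_i\in[0,1]$. Let $\overrightarrow{p_1}=(1,z_1,0)$, $\overrightarrow{p_2}=(0,1,z_2)$, $\overrightarrow{p_3}=(z_3,0,1)$, and let $m_{12},m_{23},m_{31}$ be given by $$m_{12}=\frac{(1-z_1)(1-z_2)(1-z_3)-(1-z_1)(1-z_2)+(1-z_1)}{(1-z_1)(1-z_2)(1-z_3)+1},$$ $$m_{23}=\frac{(1-z_1)(1-z_2)(1-z_3)-(1-z_2)(1-z_3)+(1-z_2)}{(1-z_1)(1-z_2)(1-z_3)+1},$$ $$m_{31}=\frac{(1-z_1)(1-z_2)(1-z_3)-(1-z_3)(1-z_1)+(1-z_3)}{(1-z_1)(1-z_2)(1-z_3)+1}.$$ Then $m_{12},m_{23},m_{31}\ge0$, $m_{12}+m_{23}+m_{31}=1$, and the probability measure on $[0,1]^3$ placing mass $m_{12}$, $m_{23}$, $m_{31}$ uniformly on the segments $[\overrightarrow{p_1},\overrightarrow{p_2}]$, $[\overrightarrow{p_2},\overrightarrow{p_3}]$, $[\overrightarrow{p_3},\overrightarrow{p_1}]$ respectively has uniform$[0,1]$ marginals and is supported on the plane $w_1u_1+w_2u_2+w_3u_3=\frac{w_1+w_2+w_3}{2}$.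
   Context: "Mass $m$ uniformly on the segment $[\overrightarrow{p},\overrightarrow{q}]$" means the measure $m$ times the law of $t\overrightarrow{p}+(1-t)\overrightarrow{q}$ with $t$ uniform on $[0,1]$. *)

theory Defs
  imports "HOL-Analysis.Analysis" "HOL-Probability.Probability"
begin

definition segment_law :: "real^3 \<Rightarrow> real^3 \<Rightarrow> (real^3) measure" where
  "segment_law p q = distr (uniform_measure lborel {0..1::real}) borel (\<lambda>t. t *\<^sub>R p + (1 - t) *\<^sub>R q)"

definition triangle_measure ::
  "real \<Rightarrow> real \<Rightarrow> real \<Rightarrow> real^3 \<Rightarrow> real^3 \<Rightarrow> real^3 \<Rightarrow> (real^3) measure" where
  "triangle_measure a b c p1 p2 p3 = measure_of UNIV (sets borel)
     (\<lambda>A. ennreal a * emeasure (segment_law p1 p2) A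
        + ennreal b * emeasure (segment_law p2 p3) A
        + ennreal c * emeasure (segment_law p3 p1) A)"

end

theory Submission
  imports Defs
begin

text \<open>The corners \<open>p1, p2, p3\<close> lie in the unit cube and on the plane, both convex, so all
three segments do. Along a segment a coordinate runs affinely between its values at the two ends,
so mass \<open>m\<close> on the segment projects to density \<open>m / \<ell>\<close> on that interval of length \<open>\<ell>\<close>. In the first
coordinate \<open>[p1,p2]\<close> covers \<open>[0,1]\<close> with density \<open>m12\<close>, while \<open>[p2,p3]\<close> and \<open>[p3,p1]\<close> cover
\<open>[0,z3]\<close> and \<open>[z3,1]\<close>; the weights satisfy \<open>m23 = z3 (1 - m12)\<close> and \<open>m31 = (1 - z3) (1 - m12)\<close>,
so both contribute density \<open>1 - m12\<close> and the total is \<open>1\<close>. The other coordinates follow by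
the cyclic symmetry of the construction. These weight identities rest on
\<open>z1 z2 z3 = (1 - z1) (1 - z2) (1 - z3)\<close>, which holds for the given \<open>z\<close>'s.\<close>

lemma sets_segment_law [simp]: "sets (segment_law p q) = sets borel"
  by (simp add: segment_law_def)

lemma prob_space_segment_law: "prob_space (segment_law p q)"
  unfolding segment_law_def
  by (intro prob_space.prob_space_distr prob_space_uniform_measure) auto

lemma emeasure_segment_law:
  assumes "N \<in> sets borel"
  shows "emeasure (segment_law p q) N
    = emeasure lborel ({0..1} \<inter> (\<lambda>t. t *\<^sub>R p + (1 - t) *\<^sub>R q) -` N)"
proof -
  have [measurable]: "(\<lambda>t::real. t *\<^sub>R p + (1 - t) *\<^sub>R q) \<in> borel_measurable borel"
    by measurable
  have "(\<lambda>t. t *\<^sub>R p + (1 - t) *\<^sub>R q) -` N \<in> sets borel"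
    using measurable_sets_borel[OF _ assms] by measurable
  then show ?thesis
    unfolding segment_law_def using assms
    by (subst emeasure_distr) (auto simp: Int_commute divide_ennreal_def)
qed

lemma AE_segment_law: "AE u in segment_law p q. u \<in> closed_segment p q"
  unfolding segment_law_def
proof (subst AE_distr_iff)
  show "AE t in uniform_measure lborel {0..1}. t *\<^sub>R p + (1 - t) *\<^sub>R q \<in> closed_segment p q"
    by (intro AE_uniform_measureI AE_I2) (auto simp: in_segment intro!: exI[of _ "1 - _"])
qed auto

lemma emeasure_segment_law_disjoint:
  assumes "N \<inter> closed_segment p q = {}"
  shows "emeasure (segment_law p q) N = 0"
proof -
  have "AE u in segment_law p q. u \<notin> N"
    using AE_segment_law by eventually_elim (use assms in blast)
  from emeasure_eq_0_AE[OF this] show ?thesis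
    by (simp add: segment_law_def)
qed

lemma emeasure_lborel_affine_vimage:
  fixes c d :: real
  assumes "d \<noteq> 0" and "B \<in> sets borel"
  shows "emeasure lborel B = ennreal \<bar>d\<bar> * emeasure lborel ((\<lambda>t. c + d * t) -` B)"
  using assms
  by (subst lborel_real_affine[OF \<open>d \<noteq> 0\<close>, of c])
     (simp add: emeasure_density emeasure_distr nn_integral_cmult_indicator)

lemma affine_mem_Icc_iff:
  fixes c d t :: real
  assumes "d \<noteq> 0"
  shows "c + d * t \<in> {min c (c + d)..max c (c + d)} \<longleftrightarrow> t \<in> {0..1}"
proof (cases "d > 0")
  case True
  then show ?thesis
    by (auto simp: min_def max_def mult_le_cancel_left1 zero_le_mult_iff)
next
  case False
  with assms have "d < 0" by simp
  then show ?thesis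
    by (auto simp: min_def max_def mult_le_cancel_left1 zero_le_mult_iff mult_le_0_iff)
qed

lemma emeasure_segment_law_coordinate:
  assumes "A \<in> sets borel"
  shows "ennreal \<bar>p$i - q$i\<bar> * emeasure (segment_law p q) {u. u $ i \<in> A}
    = emeasure lborel (A \<inter> {min (q$i) (p$i)..max (q$i) (p$i)})"
proof (cases "p$i = q$i")
  case True
  have "emeasure lborel (A \<inter> {min (q$i) (p$i)..max (q$i) (p$i)}) \<le> emeasure lborel {q$i..q$i}"
    by (rule emeasure_mono) (use True assms in auto)
  then show ?thesis
    using True by simp
next
  case False
  define d where "d = p$i - q$i"
  have "d \<noteq> 0" and p: "p$i = q$i + d"
    using False by (simp_all add: d_def)
  have "(t *\<^sub>R p + (1 - t) *\<^sub>R q) $ i = q$i + d * t" for t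
    by (simp add: p algebra_simps)
  moreover have "q$i + d * t \<in> {min (q$i) (p$i)..max (q$i) (p$i)} \<longleftrightarrow> t \<in> {0..1}" for t
    unfolding p by (rule affine_mem_Icc_iff[OF \<open>d \<noteq> 0\<close>])
  ultimately have "{0..1} \<inter> (\<lambda>t. t *\<^sub>R p + (1 - t) *\<^sub>R q) -` {u. u $ i \<in> A}
      = (\<lambda>t. q$i + d * t) -` (A \<inter> {min (q$i) (p$i)..max (q$i) (p$i)})"
    by (auto simp del: atLeastAtMost_iff)
  moreover have "{u :: real^3. u $ i \<in> A} \<in> sets borel"
    using assms by measurable
  ultimately show ?thesis
    using emeasure_lborel_affine_vimage[OF \<open>d \<noteq> 0\<close>, of "A \<inter> _" "q$i"] assms
    by (simp add: emeasure_segment_law d_def)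
qed

lemma emeasure_lborel_Int_Icc_split:
  fixes a z b :: real
  assumes "A \<in> sets borel" "a \<le> z" "z \<le> b"
  shows "emeasure lborel (A \<inter> {a..z}) + emeasure lborel (A \<inter> {z..b})
    = emeasure lborel (A \<inter> {a..b})"
proof -
  have null: "A \<inter> {z} \<in> null_sets lborel"
    by (rule null_sets_subset[of "{z}"]) (use assms(1) in auto)
  have "A \<inter> {z..b} = (A \<inter> {z<..b}) \<union> (A \<inter> {z})"
    using assms by auto
  then have "emeasure lborel (A \<inter> {z..b}) = emeasure lborel (A \<inter> {z<..b})"
    using emeasure_Un_null_set[OF _ null, of "A \<inter> {z<..b}"] assms(1) by simp
  moreover have "A \<inter> {a..b} = (A \<inter> {a..z}) \<union> (A \<inter> {z<..b})"
    using assms by auto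
  moreover have "(A \<inter> {a..z}) \<inter> (A \<inter> {z<..b}) = {}"
    by auto
  ultimately show ?thesis
    using plus_emeasure[of "A \<inter> {a..z}" lborel "A \<inter> {z<..b}"] assms(1) by simp
qed

lemma sets_triangle_measure [simp]: "sets (triangle_measure a b c p1 p2 p3) = sets borel"
  unfolding triangle_measure_def using sets.sigma_sets_eq[of borel]
  by (simp add: sets_measure_of_conv)

lemma space_triangle_measure [simp]: "space (triangle_measure a b c p1 p2 p3) = UNIV"
  unfolding triangle_measure_def by (simp add: space_measure_of_conv)

lemma emeasure_triangle_measure:
  assumes "A \<in> sets borel"
  shows "emeasure (triangle_measure a b c p1 p2 p3) A =
     ennreal a * emeasure (segment_law p1 p2) A
        + ennreal b * emeasure (segment_law p2 p3) A
        + ennreal c * emeasure (segment_law p3 p1) A"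
  unfolding triangle_measure_def
proof (rule emeasure_measure_of_sigma)
  show "sigma_algebra UNIV (sets borel)"
    by (metis sets.sigma_algebra_axioms space_borel)
  show "positive (sets borel) (\<lambda>A. ennreal a * emeasure (segment_law p1 p2) A
        + ennreal b * emeasure (segment_law p2 p3) A
        + ennreal c * emeasure (segment_law p3 p1) A)"
    by (simp add: positive_def)
  show "countably_additive (sets borel) (\<lambda>A. ennreal a * emeasure (segment_law p1 p2) A
        + ennreal b * emeasure (segment_law p2 p3) A
        + ennreal c * emeasure (segment_law p3 p1) A)"
    unfolding countably_additive_def
  proof (intro allI impI)
    fix F :: "nat \<Rightarrow> (real^3) set"
    assume F: "range F \<subseteq> sets borel" "disjoint_family F"
    have "(\<Sum>n. emeasure (segment_law p q) (F n)) = emeasure (segment_law p q) (\<Union> (range F))"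
      for p q
      by (rule suminf_emeasure) (use F in auto)
    then show "(\<Sum>n. ennreal a * emeasure (segment_law p1 p2) (F n)
        + ennreal b * emeasure (segment_law p2 p3) (F n)
        + ennreal c * emeasure (segment_law p3 p1) (F n)) =
      ennreal a * emeasure (segment_law p1 p2) (\<Union> (range F))
        + ennreal b * emeasure (segment_law p2 p3) (\<Union> (range F))
        + ennreal c * emeasure (segment_law p3 p1) (\<Union> (range F))"
      by (simp add: suminf_add[symmetric])
  qed
qed (fact assms)

lemma triangle_measure_rotate:
  "triangle_measure a b c p1 p2 p3 = triangle_measure b c a p2 p3 p1"
  unfolding triangle_measure_def by (simp add: ac_simps)

lemma prob_space_triangle_measure:
  assumes "a \<ge> 0" "b \<ge> 0" "c \<ge> 0" "a + b + c = 1"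
  shows "prob_space (triangle_measure a b c p1 p2 p3)"
proof
  have "emeasure (segment_law p q) UNIV = 1" for p q
    using prob_space.emeasure_space_1[OF prob_space_segment_law, of p q]
    by (simp add: segment_law_def)
  then have "emeasure (triangle_measure a b c p1 p2 p3) UNIV = ennreal a + ennreal b + ennreal c"
    by (simp add: emeasure_triangle_measure)
  also have "\<dots> = 1"
    using assms by (simp add: ennreal_plus[symmetric] del: ennreal_plus)
  finally show "emeasure (triangle_measure a b c p1 p2 p3) (space (triangle_measure a b c p1 p2 p3)) = 1"
    by simp
qed

lemma AE_triangle_measure_convex:
  assumes "convex S" "p1 \<in> S" "p2 \<in> S" "p3 \<in> S"
  shows "AE u in triangle_measure a b c p1 p2 p3. u \<in> S"
proof -
  define T where "T = closed_segment p1 p2 \<union> closed_segment p2 p3 \<union> closed_segment p3 p1"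
  have null: "emeasure (segment_law p q) (- T) = 0" if "closed_segment p q \<subseteq> T" for p q
    using that by (intro emeasure_segment_law_disjoint) blast
  have "- T \<in> sets borel"
    unfolding T_def by (intro borel_open open_Compl closed_Un closed_segment)
  moreover have "emeasure (segment_law p1 p2) (- T) = 0" "emeasure (segment_law p2 p3) (- T) = 0"
    "emeasure (segment_law p3 p1) (- T) = 0"
    by (intro null; auto simp: T_def)+
  ultimately have "- T \<in> null_sets (triangle_measure a b c p1 p2 p3)"
    by (simp add: null_sets_def emeasure_triangle_measure)
  moreover have "- S \<subseteq> - T"
    using closed_segment_subset[OF _ _ assms(1)] assms(2-4) by (auto simp: T_def)
  ultimately show ?thesis
    by (intro AE_I'[of "- T"]) auto
qed

lemma AE_triangle_measure_unit_cube:
  assumes "p1 \<in> cbox 0 1" "p2 \<in> cbox 0 1" "p3 \<in> cbox 0 1"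
  shows "AE u in triangle_measure a b c p1 p2 p3. \<forall>i. u $ i \<in> {0..1}"
  using AE_triangle_measure_convex[of "cbox 0 1", OF convex_box(1) assms]
  by (simp add: mem_box_cart)

lemma AE_triangle_measure_plane:
  fixes p1 p2 p3 :: "real^3" and w1 w2 w3 s :: real
  defines "H \<equiv> {u :: real^3. w1 * u $ 1 + w2 * u $ 2 + w3 * u $ 3 = s}"
  assumes "p1 \<in> H" "p2 \<in> H" "p3 \<in> H"
  shows "AE u in triangle_measure a b c p1 p2 p3. w1 * u $ 1 + w2 * u $ 2 + w3 * u $ 3 = s"
proof -
  have "H = {u. inner (vector [w1, w2, w3]) u = s}"
    by (simp add: H_def inner_vec_def sum_3)
  then have "convex H"
    by (simp only: convex_hyperplane)
  with assms show ?thesis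
    using AE_triangle_measure_convex[of H] by (simp add: H_def)
qed

lemma distr_coordinate_triangle_measure:
  fixes p q r :: "real^3"
  assumes z: "0 \<le> z" "z \<le> 1" and m: "0 \<le> m" "m \<le> 1"
    and coordinates: "p$i = 1" "q$i = 0" "r$i = z"
    and weights: "b = z * (1 - m)" "c = (1 - z) * (1 - m)"
  shows "distr (triangle_measure m b c p q r) borel (\<lambda>u. u $ i) = uniform_measure lborel {0..1}"
proof (rule measure_eqI)
  fix A :: "real set"
  assume "A \<in> sets (distr (triangle_measure m b c p q r) borel (\<lambda>u. u $ i))"
  then have A: "A \<in> sets borel"
    by simp
  let ?L = "\<lambda>S. emeasure lborel (A \<inter> S)"
  have pq: "emeasure (segment_law p q) {u. u $ i \<in> A} = ?L {0..1}"
    using emeasure_segment_law_coordinate[OF A, of p i q] coordinates by simp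
  have qr: "ennreal b * emeasure (segment_law q r) {u. u $ i \<in> A} = ennreal (1 - m) * ?L {0..z}"
  proof -
    have "ennreal b = ennreal (1 - m) * ennreal z"
      using z m by (simp add: weights ennreal_mult mult.commute)
    then show ?thesis
      using emeasure_segment_law_coordinate[OF A, of q i r] coordinates z by (simp add: mult.assoc)
  qed
  have rp: "ennreal c * emeasure (segment_law r p) {u. u $ i \<in> A} = ennreal (1 - m) * ?L {z..1}"
  proof -
    have "ennreal c = ennreal (1 - m) * ennreal (1 - z)"
      using z m by (simp add: weights ennreal_mult mult.commute)
    then show ?thesis
      using emeasure_segment_law_coordinate[OF A, of r i p] coordinates z by (simp add: mult.assoc)
  qed
  have "(\<lambda>u. u $ i) \<in> measurable (triangle_measure m b c p q r) borel"
    by (subst measurable_cong_sets[OF sets_triangle_measure refl]) measurable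
  moreover have "{u :: real^3. u $ i \<in> A} \<in> sets borel"
    using A by measurable
  ultimately have "emeasure (distr (triangle_measure m b c p q r) borel (\<lambda>u. u $ i)) A
      = ennreal m * ?L {0..1} + ennreal (1 - m) * (?L {0..z} + ?L {z..1})"
    using A by (simp add: emeasure_distr vimage_def emeasure_triangle_measure pq qr rp
        distrib_left add.assoc)
  also have "\<dots> = (ennreal m + ennreal (1 - m)) * ?L {0..1}"
    using emeasure_lborel_Int_Icc_split[OF A z] by (simp add: distrib_right)
  also have "\<dots> = emeasure (uniform_measure lborel {0..1}) A"
    using A m by (simp add: ennreal_plus[symmetric] Int_commute divide_ennreal_def del: ennreal_plus)
  finally show "emeasure (distr (triangle_measure m b c p q r) borel (\<lambda>u. u $ i)) A
      = emeasure (uniform_measure lborel {0..1}) A" .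
qed simp

lemma distr_coordinate_triangle_measure_cyclic:
  assumes z: "z1 \<in> {0..1}" "z2 \<in> {0..1}" "z3 \<in> {0..1}"
    and m: "m12 \<ge> 0" "m23 \<ge> 0" "m31 \<ge> 0" "m12 + m23 + m31 = 1"
    and split1: "m23 = z3 * (1 - m12)" "m31 = (1 - z3) * (1 - m12)"
    and split2: "m31 = z1 * (1 - m23)" "m12 = (1 - z1) * (1 - m23)"
    and split3: "m12 = z2 * (1 - m31)" "m23 = (1 - z2) * (1 - m31)"
  defines "\<mu> \<equiv> triangle_measure m12 m23 m31 (vector [1, z1, 0]) (vector [0, 1, z2]) (vector [z3, 0, 1])"
  shows "distr \<mu> borel (\<lambda>u. u $ i) = uniform_measure lborel {0..1}"
proof -
  have m_le_1: "m12 \<le> 1" "m23 \<le> 1" "m31 \<le> 1"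
    using m by linarith+
  have \<mu>_rotated:
    "\<mu> = triangle_measure m23 m31 m12 (vector [0, 1, z2]) (vector [z3, 0, 1]) (vector [1, z1, 0])"
    "\<mu> = triangle_measure m31 m12 m23 (vector [z3, 0, 1]) (vector [1, z1, 0]) (vector [0, 1, z2])"
    unfolding \<mu>_def by (metis triangle_measure_rotate)+
  from exhaust_3[of i] show ?thesis
  proof (elim disjE)
    assume "i = 1"
    then show ?thesis
      unfolding \<mu>_def using z m split1 m_le_1
      by (intro distr_coordinate_triangle_measure[where z = z3]) simp_all
  next
    assume "i = 2"
    then show ?thesis
      unfolding \<mu>_rotated(1) using z m split2 m_le_1
      by (intro distr_coordinate_triangle_measure[where z = z1]) simp_all
  next
    assume "i = 3"
    then show ?thesis
      unfolding \<mu>_rotated(2) using z m split3 m_le_1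
      by (intro distr_coordinate_triangle_measure[where z = z2]) simp_all
  qed
qed

lemma triangle_weights:
  fixes z1 z2 z3 :: real
  assumes z: "z1 \<in> {0..1}" "z2 \<in> {0..1}" "z3 \<in> {0..1}"
    and balanced: "z1 * z2 * z3 = (1 - z1) * (1 - z2) * (1 - z3)"
  defines "P \<equiv> (1 - z1) * (1 - z2) * (1 - z3)"
  defines "m12 \<equiv> (P - (1 - z1) * (1 - z2) + (1 - z1)) / (P + 1)"
    and "m23 \<equiv> (P - (1 - z2) * (1 - z3) + (1 - z2)) / (P + 1)"
    and "m31 \<equiv> (P - (1 - z3) * (1 - z1) + (1 - z3)) / (P + 1)"
  shows "m12 \<ge> 0" "m23 \<ge> 0" "m31 \<ge> 0" "m12 + m23 + m31 = 1"
    and "m23 = z3 * (1 - m12)" "m31 = (1 - z3) * (1 - m12)"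
    and "m31 = z1 * (1 - m23)" "m12 = (1 - z1) * (1 - m23)"
    and "m12 = z2 * (1 - m31)" "m23 = (1 - z2) * (1 - m31)"
proof -
  have "P \<ge> 0"
    using z by (simp add: P_def)
  then have "P + 1 > 0"
    by simp
  have le1: "(1 - z2) * z3 \<le> 1" "(1 - z3) * z1 \<le> 1" "(1 - z1) * z2 \<le> 1"
    using z by (auto intro: mult_le_one)
  have numerators: "P - (1 - z1) * (1 - z2) + (1 - z1) = (1 - z1) * (1 - (1 - z2) * z3)"
    "P - (1 - z2) * (1 - z3) + (1 - z2) = (1 - z2) * (1 - (1 - z3) * z1)"
    "P - (1 - z3) * (1 - z1) + (1 - z3) = (1 - z3) * (1 - (1 - z1) * z2)"
    unfolding P_def by (simp_all add: algebra_simps)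
  show "m12 \<ge> 0" "m23 \<ge> 0" "m31 \<ge> 0"
    unfolding m12_def m23_def m31_def numerators using \<open>P + 1 > 0\<close> z le1 by simp_all
  txt \<open>The balance condition says exactly that the three numerators add up to \<open>P + 1\<close>.\<close>
  have "(P - (1 - z1) * (1 - z2) + (1 - z1)) + (P - (1 - z2) * (1 - z3) + (1 - z2))
      + (P - (1 - z3) * (1 - z1) + (1 - z3)) = P + 1"
    using balanced unfolding P_def by algebra
  then show sum: "m12 + m23 + m31 = 1"
    unfolding m12_def m23_def m31_def using \<open>P + 1 > 0\<close>
    by (simp add: add_divide_distrib[symmetric])
  show rec: "m31 = (1 - z3) * (1 - m12)" "m12 = (1 - z1) * (1 - m23)" "m23 = (1 - z2) * (1 - m31)"
    unfolding m12_def m23_def m31_def using \<open>P + 1 > 0\<close>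
    by (simp_all add: field_simps) (simp_all add: P_def algebra_simps)
  show "m23 = z3 * (1 - m12)"
    using sum rec(1) by algebra
  show "m31 = z1 * (1 - m23)"
    using sum rec(2) by algebra
  show "m12 = z2 * (1 - m31)"
    using sum rec(3) by algebra
qed

lemma triangle_ratios:
  fixes w1 w2 w3 :: real
  assumes "w1 > 0" "w2 > 0" "w3 > 0"
    and "w1 \<le> w2 + w3" "w2 \<le> w3 + w1" "w3 \<le> w1 + w2"
  defines "z1 \<equiv> (w2 + w3 - w1) / (2 * w2)"
    and "z2 \<equiv> (w3 + w1 - w2) / (2 * w3)"
    and "z3 \<equiv> (w1 + w2 - w3) / (2 * w1)"
  shows "z1 \<in> {0..1}" "z2 \<in> {0..1}" "z3 \<in> {0..1}"
    and "z1 * z2 * z3 = (1 - z1) * (1 - z2) * (1 - z3)"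
proof -
  show "z1 \<in> {0..1}" "z2 \<in> {0..1}" "z3 \<in> {0..1}"
    using assms by (auto simp: z1_def z2_def z3_def divide_simps)
  show "z1 * z2 * z3 = (1 - z1) * (1 - z2) * (1 - z3)"
    using assms by (simp add: z1_def z2_def z3_def field_simps)
qed

theorem mainTheorem5:
  fixes w1 w2 w3 :: real
  assumes pos: "w1 > 0" "w2 > 0" "w3 > 0"
    and tri: "w1 + w2 + w3 \<ge> 2 * Max {w1, w2, w3}"
  defines "z1 \<equiv> (w2 + w3 - w1) / (2 * w2)"
    and "z2 \<equiv> (w3 + w1 - w2) / (2 * w3)"
    and "z3 \<equiv> (w1 + w2 - w3) / (2 * w1)"
  defines "p1 \<equiv> vector [1, z1, 0] :: real^3"
    and "p2 \<equiv> vector [0, 1, z2] :: real^3"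
    and "p3 \<equiv> vector [z3, 0, 1] :: real^3"
  defines "P \<equiv> (1 - z1) * (1 - z2) * (1 - z3)"
  defines "m12 \<equiv> (P - (1 - z1) * (1 - z2) + (1 - z1)) / (P + 1)"
    and "m23 \<equiv> (P - (1 - z2) * (1 - z3) + (1 - z2)) / (P + 1)"
    and "m31 \<equiv> (P - (1 - z3) * (1 - z1) + (1 - z3)) / (P + 1)"
  defines "\<mu> \<equiv> triangle_measure m12 m23 m31 p1 p2 p3"
  shows "z1 \<in> {0..1} \<and> z2 \<in> {0..1} \<and> z3 \<in> {0..1}
    \<and> m12 \<ge> 0 \<and> m23 \<ge> 0 \<and> m31 \<ge> 0 \<and> m12 + m23 + m31 = 1
    \<and> prob_space \<mu>
    \<and> (AE u in \<mu>. \<forall>i. u $ i \<in> {0..1})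
    \<and> (\<forall>i::3. distr \<mu> borel (\<lambda>u. u $ i) = uniform_measure lborel {0..1::real})
    \<and> (AE u in \<mu>. w1 * u $ 1 + w2 * u $ 2 + w3 * u $ 3 = (w1 + w2 + w3) / 2)"
proof -
  have "w1 \<le> w2 + w3" "w2 \<le> w3 + w1" "w3 \<le> w1 + w2"
    using tri by (auto simp: max_def split: if_splits)
  note z = triangle_ratios[OF pos this, folded z1_def z2_def z3_def]
  note m = triangle_weights[OF z, folded P_def, folded m12_def m23_def m31_def]
  have "prob_space \<mu>"
    unfolding \<mu>_def using m(1-4) by (rule prob_space_triangle_measure)
  moreover have "AE u in \<mu>. \<forall>i. u $ i \<in> {0..1}"
    unfolding \<mu>_def using z(1-3)
    by (intro AE_triangle_measure_unit_cube) (simp_all add: p1_def p2_def p3_def mem_box_cart forall_3)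
  moreover have "distr \<mu> borel (\<lambda>u. u $ i) = uniform_measure lborel {0..1}" for i
    unfolding \<mu>_def p1_def p2_def p3_def by (rule distr_coordinate_triangle_measure_cyclic[OF z(1-3) m])
  moreover have "AE u in \<mu>. w1 * u $ 1 + w2 * u $ 2 + w3 * u $ 3 = (w1 + w2 + w3) / 2"
    unfolding \<mu>_def using pos
    by (intro AE_triangle_measure_plane)
      (simp_all add: p1_def p2_def p3_def z1_def z2_def z3_def field_simps)
  ultimately show ?thesis
    using z(1-3) m(1-4) by blast
qed

end
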